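(* Let $\phi:\mathbb{R}\to\mathbb{R}$ be a $C^\infty$ function such that $\phi(t)=0$ for $t\le 0$, $\phi(t)=e^{-1/e^{-1/t}}$ for $t\in\,]0,1]$, and $\phi'(t)>0$ for all $t>0$. Fix $0<\lambda<1$ and define $h:\mathbb{R}\to\mathbb{R}$ by $h(t)=t$ for $t\le 0$ and $h(t)=\phi^{-1}(\lambda^3\phi(t))$ for $t>0$, where $\phi^{-1}$ denotes the inverse of the strictly increasing map $\phi$ restricted to $]0,+\infty[$. Then $h$ is of class $C^\infty$ at $0$ (i.e. in a neighbourhood of $0$). *)

theory Defs
  imports "HOL-Analysis.Analysis"
begin

definition smooth_on :: "real set \<Rightarrow> (real \<Rightarrow> real) \<Rightarrow> bool" where
  "smooth_on S f \<longleftrightarrow> (\<forall>n. \<forall>x\<in>S. ((deriv ^^ n) f) differentiable (at x))"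

end

theory Submission
  imports Defs "HOL-Computational_Algebra.Polynomial"
begin

text \<open>For \<open>0 < t \<le> 1\<close> the equation \<open>\<phi>(h t) = \<lambda>^3 \<phi>(t)\<close> can be solved explicitly: with
  \<open>c = -ln(\<lambda>^3) > 0\<close> it reads \<open>exp(1/h) = exp(1/t) + c\<close>, i.e.
  \<open>h(t) = t / (1 + t ln(1 + c exp(-1/t)))\<close>. Extending \<open>exp(-1/t)\<close> by \<open>0\<close> for \<open>t \<le> 0\<close> gives the
  classical flat smooth function, and with this extension the same formula also yields \<open>h(t) = t\<close>
  for \<open>t \<le> 0\<close>. So on \<open>]-\<infinity>,1[\<close> the map \<open>h\<close> is built from smooth functions by sums, products,
  and \<open>ln\<close> and \<open>inverse\<close> of positive functions, hence smooth.\<close>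

fun differentiable_upto :: "nat \<Rightarrow> real set \<Rightarrow> (real \<Rightarrow> real) \<Rightarrow> bool" where
  "differentiable_upto 0 S f = True"
| "differentiable_upto (Suc n) S f \<longleftrightarrow>
     (\<forall>x\<in>S. (f has_real_derivative deriv f x) (at x)) \<and> differentiable_upto n S (deriv f)"

lemma differentiable_upto_SucD: "differentiable_upto (Suc n) S f \<Longrightarrow> differentiable_upto n S f"
  by (induction n arbitrary: f) auto

lemma differentiable_upto_subset:
  "differentiable_upto n T f \<Longrightarrow> S \<subseteq> T \<Longrightarrow> differentiable_upto n S f"
  by (induction n arbitrary: f) auto

lemma differentiable_upto_cong:
  assumes "open S" and "\<And>x. x \<in> S \<Longrightarrow> f x = g x" and "differentiable_upto n S f"
  shows "differentiable_upto n S g"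
  using assms(2,3)
proof (induction n arbitrary: f g)
  case 0
  then show ?case by simp
next
  case (Suc n)
  have g': "(g has_real_derivative deriv f x) (at x)" if "x \<in> S" for x
    using has_field_derivative_transform_within_open[of f "deriv f x" x S g] Suc.prems that assms(1)
    by auto
  then have "deriv f x = deriv g x" if "x \<in> S" for x
    using that DERIV_imp_deriv by metis
  with g' Suc.IH[of "deriv f" "deriv g"] Suc.prems show ?case by auto
qed

lemma differentiable_upto_SucI:
  assumes "open S" and "\<And>x. x \<in> S \<Longrightarrow> (f has_real_derivative f' x) (at x)"
    and "differentiable_upto n S f'"
  shows "differentiable_upto (Suc n) S f"
proof -
  have "deriv f x = f' x" if "x \<in> S" for x
    using DERIV_imp_deriv[OF assms(2)[OF that]] .
  moreover from this have "differentiable_upto n S (deriv f)"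
    using differentiable_upto_cong[OF assms(1) _ assms(3)] by metis
  ultimately show ?thesis using assms(2) by simp
qed

lemma differentiable_upto_const: "differentiable_upto n S (\<lambda>x. c)"
proof (induction n arbitrary: c)
  case (Suc n)
  have "deriv (\<lambda>x. c) = (\<lambda>x::real. 0::real)" by (intro ext DERIV_imp_deriv) auto
  then show ?case using Suc by auto
qed simp

lemma differentiable_upto_ident: "differentiable_upto n S (\<lambda>x. x)"
proof (cases n)
  case (Suc m)
  have "deriv (\<lambda>x. x) = (\<lambda>x::real. 1::real)" by (intro ext DERIV_imp_deriv) auto
  then show ?thesis using Suc differentiable_upto_const by auto
qed simp

lemma differentiable_upto_add:
  assumes "open S"
  shows "differentiable_upto n S f \<Longrightarrow> differentiable_upto n S g \<Longrightarrow>
    differentiable_upto n S (\<lambda>x. f x + g x)"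
proof (induction n arbitrary: f g)
  case (Suc n)
  have "((\<lambda>x. f x + g x) has_real_derivative deriv f x + deriv g x) (at x)" if "x \<in> S" for x
    using Suc.prems that by (auto intro!: derivative_eq_intros)
  with Suc show ?case by (intro differentiable_upto_SucI[OF assms]) auto
qed simp

lemma differentiable_upto_mult:
  assumes "open S"
  shows "differentiable_upto n S f \<Longrightarrow> differentiable_upto n S g \<Longrightarrow>
    differentiable_upto n S (\<lambda>x. f x * g x)"
proof (induction n arbitrary: f g)
  case (Suc n)
  have "((\<lambda>x. f x * g x) has_real_derivative deriv f x * g x + f x * deriv g x) (at x)"
    if "x \<in> S" for x
    using Suc.prems that by (auto intro!: derivative_eq_intros)
  moreover have "differentiable_upto n S (\<lambda>x. deriv f x * g x + f x * deriv g x)"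
    using Suc differentiable_upto_SucD[OF Suc.prems(1)] differentiable_upto_SucD[OF Suc.prems(2)]
    by (auto intro!: differentiable_upto_add[OF assms])
  ultimately show ?case by (rule differentiable_upto_SucI[OF assms])
qed simp

lemma differentiable_upto_compose:
  assumes "open S"
  shows "differentiable_upto n T f \<Longrightarrow> differentiable_upto n S g \<Longrightarrow> g ` S \<subseteq> T \<Longrightarrow>
    differentiable_upto n S (\<lambda>x. f (g x))"
proof (induction n arbitrary: f g)
  case (Suc n)
  have "((\<lambda>x. f (g x)) has_real_derivative deriv f (g x) * deriv g x) (at x)" if "x \<in> S" for x
    using Suc.prems that by (intro DERIV_chain2) auto
  moreover have "differentiable_upto n S (\<lambda>x. deriv f (g x) * deriv g x)"
    using Suc differentiable_upto_SucD[OF Suc.prems(2)]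
    by (auto intro!: differentiable_upto_mult[OF assms])
  ultimately show ?case by (rule differentiable_upto_SucI[OF assms])
qed simp

lemma differentiable_upto_inverse: "differentiable_upto n {0<..} inverse"
proof (induction n)
  case (Suc n)
  have "(inverse has_real_derivative - 1 * (inverse x * inverse x)) (at x)" if "x \<in> {0<..}" for x
    using that by (auto intro!: derivative_eq_intros simp: power2_eq_square)
  moreover have "differentiable_upto n {0<..} (\<lambda>x. - 1 * (inverse x * inverse x))"
    by (intro differentiable_upto_mult differentiable_upto_const Suc.IH) auto
  ultimately show ?case by (intro differentiable_upto_SucI) auto
qed simp

lemma differentiable_upto_ln: "differentiable_upto n {0<..} ln"
proof (cases n)
  case (Suc m)
  have "(ln has_real_derivative inverse x) (at x)" if "x \<in> {0<..}" for x
    using that by (auto intro!: derivative_eq_intros simp: inverse_eq_divide)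
  then show ?thesis
    unfolding Suc by (intro differentiable_upto_SucI[OF _ _ differentiable_upto_inverse]) auto
qed simp

lemma differentiable_upto_funpow_deriv:
  "differentiable_upto (m + n) S f \<Longrightarrow> differentiable_upto m S ((deriv ^^ n) f)"
  by (induction n arbitrary: f) (auto simp: funpow_Suc_right simp del: funpow.simps)

lemma smooth_onI_differentiable_upto:
  assumes "\<And>n. differentiable_upto n S f"
  shows "smooth_on S f"
  unfolding smooth_on_def
proof (intro allI ballI)
  fix n x assume "x \<in> S"
  have "differentiable_upto 1 S ((deriv ^^ n) f)"
    using assms differentiable_upto_funpow_deriv[of 1 n S f] by auto
  with \<open>x \<in> S\<close> show "(deriv ^^ n) f differentiable at x"
    by (auto simp: real_differentiable_def)
qed

definition flat_exp :: "real poly \<Rightarrow> real \<Rightarrow> real" where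
  "flat_exp p t = (if t \<le> 0 then 0 else poly p (1 / t) * exp (- 1 / t))"

text \<open>With \<open>u = 1/t\<close>, \<open>d/dt (p(u) exp(-u)) = u^2 (p(u) - p'(u)) exp(-u)\<close>.\<close>

definition flat_exp_deriv_poly :: "real poly \<Rightarrow> real poly" where
  "flat_exp_deriv_poly p = [:0, 0, 1:] * (p - pderiv p)"

lemma poly_times_exp_minus_tendsto_0: "((\<lambda>u. poly p u * exp (- u)) \<longlongrightarrow> (0::real)) at_top"
proof -
  have "poly p u * exp (- u) = (\<Sum>i\<le>degree p. coeff p i * (u ^ i / exp u))" for u
    by (simp add: poly_altdef sum_distrib_right exp_minus divide_inverse mult.assoc)
  then show ?thesis
    by (simp only:) (intro tendsto_null_sum tendsto_mult_right_zero tendsto_power_div_exp_0)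
qed

lemma poly_inverse_times_exp_has_derivative:
  assumes "x > 0"
  shows "((\<lambda>t. poly p (1 / t) * exp (- 1 / t)) has_real_derivative
      poly (flat_exp_deriv_poly p) (1 / x) * exp (- 1 / x)) (at x)"
proof -
  have "((\<lambda>t. poly p (1 / t) * exp (- 1 / t)) has_real_derivative
      poly (pderiv p) (1 / x) * (- inverse (x * x)) * exp (- 1 / x)
        + poly p (1 / x) * (exp (- 1 / x) * inverse (x * x))) (at x)"
    using assms
    by (auto intro!: derivative_eq_intros DERIV_chain2[OF poly_DERIV] simp: divide_inverse)
  moreover have "poly (pderiv p) (1 / x) * (- inverse (x * x)) * exp (- 1 / x)
        + poly p (1 / x) * (exp (- 1 / x) * inverse (x * x))
      = poly (flat_exp_deriv_poly p) (1 / x) * exp (- 1 / x)"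
    by (simp add: flat_exp_deriv_poly_def algebra_simps divide_inverse power2_eq_square)
  ultimately show ?thesis by simp
qed

lemma flat_exp_has_derivative_0: "(flat_exp p has_real_derivative 0) (at 0)"
proof -
  have "((\<lambda>y. (flat_exp p y - flat_exp p 0) / (y - 0)) \<longlongrightarrow> 0) (at 0)"
  proof (rule filterlim_split_at)
    have "\<forall>\<^sub>F y in at_left 0. 0 = (flat_exp p y - flat_exp p 0) / (y - 0)"
      by (auto simp: eventually_at_left_field flat_exp_def intro!: exI[of _ "- 1"])
    then show "((\<lambda>y. (flat_exp p y - flat_exp p 0) / (y - 0)) \<longlongrightarrow> 0) (at_left 0)"
      by (rule Lim_transform_eventually[OF tendsto_const])
  next
    \<comment> \<open>the difference quotient is \<open>u p(u) exp(-u)\<close> with \<open>u = 1/y \<rightarrow> \<infinity>\<close>\<close>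
    have "((\<lambda>y. poly (pCons 0 p) (inverse y) * exp (- inverse y)) \<longlongrightarrow> 0) (at_right 0)"
      using filterlim_compose[OF poly_times_exp_minus_tendsto_0[of "pCons 0 p"] filterlim_inverse_at_top_right]
      by simp
    moreover have "\<forall>\<^sub>F y in at_right 0. poly (pCons 0 p) (inverse y) * exp (- inverse y)
        = (flat_exp p y - flat_exp p 0) / (y - 0)"
      by (auto simp: eventually_at_right_field flat_exp_def divide_inverse intro!: exI[of _ 1])
    ultimately show "((\<lambda>y. (flat_exp p y - flat_exp p 0) / (y - 0)) \<longlongrightarrow> 0) (at_right 0)"
      by (rule Lim_transform_eventually)
  qed
  then show ?thesis by (simp add: has_field_derivative_iff)
qed

lemma flat_exp_has_derivative:
  "(flat_exp p has_real_derivative flat_exp (flat_exp_deriv_poly p) x) (at x)"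
proof (cases x "0::real" rule: linorder_cases)
  case less
  have "((\<lambda>t. 0) has_real_derivative 0) (at x)" by simp
  then have "(flat_exp p has_real_derivative 0) (at x)"
    by (rule has_field_derivative_transform_within_open[of _ _ _ "{..<0}"])
       (use less in \<open>auto simp: flat_exp_def\<close>)
  with less show ?thesis by (simp add: flat_exp_def)
next
  case equal
  with flat_exp_has_derivative_0 show ?thesis by (simp add: flat_exp_def)
next
  case greater
  have "(flat_exp p has_real_derivative poly (flat_exp_deriv_poly p) (1 / x) * exp (- 1 / x)) (at x)"
    by (rule has_field_derivative_transform_within_open[OF poly_inverse_times_exp_has_derivative[OF greater],
          of "{0<..}"])
       (use greater in \<open>auto simp: flat_exp_def\<close>)
  with greater show ?thesis by (simp add: flat_exp_def)
qed

lemma differentiable_upto_flat_exp: "differentiable_upto n UNIV (flat_exp p)"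
proof (induction n arbitrary: p)
  case (Suc n)
  have "deriv (flat_exp p) = flat_exp (flat_exp_deriv_poly p)"
    by (intro ext DERIV_imp_deriv flat_exp_has_derivative)
  with Suc flat_exp_has_derivative show ?case by simp
qed simp

lemma flat_exp_1: "flat_exp 1 t = (if t \<le> 0 then 0 else exp (- 1 / t))"
  by (simp add: flat_exp_def)

text \<open>The conjugate of the translation \<open>s \<mapsto> s + c\<close> under \<open>t \<mapsto> exp(1/t)\<close>.\<close>

definition shift_conjugate :: "real \<Rightarrow> real \<Rightarrow> real" where
  "shift_conjugate c t = t / (1 + t * ln (1 + c * flat_exp 1 t))"

lemma shift_conjugate_denom_ge_1:
  assumes "c \<ge> 0"
  shows "1 + t * ln (1 + c * flat_exp 1 t) \<ge> 1"
  using assms by (cases "t \<le> 0") (auto simp: flat_exp_1)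

lemma shift_conjugate_nonpos: "t \<le> 0 \<Longrightarrow> shift_conjugate c t = t"
  by (simp add: shift_conjugate_def flat_exp_1)

lemma shift_conjugate_pos_le:
  assumes "c \<ge> 0" "t > 0"
  shows "0 < shift_conjugate c t" "shift_conjugate c t \<le> t"
  using assms shift_conjugate_denom_ge_1[OF assms(1), of t]
  by (auto simp: shift_conjugate_def divide_le_eq)

lemma differentiable_upto_shift_conjugate:
  assumes "c \<ge> 0"
  shows "differentiable_upto n UNIV (shift_conjugate c)"
proof -
  have ln_arg: "1 + c * flat_exp 1 t > 0" for t
    using assms by (cases "t \<le> 0") (auto simp: flat_exp_1 add_pos_nonneg)
  have denom: "1 + t * ln (1 + c * flat_exp 1 t) > 0" for t
    using shift_conjugate_denom_ge_1[OF assms, of t] by linarith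
  have "differentiable_upto n UNIV (\<lambda>t. 1 + c * flat_exp 1 t)"
    by (intro differentiable_upto_add differentiable_upto_mult differentiable_upto_const
        differentiable_upto_flat_exp) auto
  then have "differentiable_upto n UNIV (\<lambda>t. ln (1 + c * flat_exp 1 t))"
    using ln_arg by (intro differentiable_upto_compose[OF _ differentiable_upto_ln]) auto
  then have "differentiable_upto n UNIV (\<lambda>t. 1 + t * ln (1 + c * flat_exp 1 t))"
    by (intro differentiable_upto_add differentiable_upto_mult differentiable_upto_const
        differentiable_upto_ident) auto
  then have "differentiable_upto n UNIV (\<lambda>t. inverse (1 + t * ln (1 + c * flat_exp 1 t)))"
    using denom by (intro differentiable_upto_compose[OF _ differentiable_upto_inverse]) auto
  then show ?thesis
    unfolding shift_conjugate_def divide_inverse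
    by (intro differentiable_upto_mult differentiable_upto_ident) auto
qed

lemma exp_exp_shift_conjugate:
  assumes "c \<ge> 0" "t > 0"
  shows "exp (- 1 / exp (- 1 / shift_conjugate c t)) = exp (- c) * exp (- 1 / exp (- 1 / t))"
proof -
  define E where "E = exp (- 1 / t)"
  have E: "E > 0" "1 + c * E > 0"
    using assms by (auto simp: E_def add_pos_nonneg)
  have "- 1 / shift_conjugate c t = - 1 / t - ln (1 + c * E)"
    using assms shift_conjugate_denom_ge_1[OF assms(1), of t]
    by (simp add: shift_conjugate_def flat_exp_1 E_def field_simps)
  then have "exp (- 1 / shift_conjugate c t) = E / (1 + c * E)"
    using E by (simp add: exp_diff E_def)
  then have "- 1 / exp (- 1 / shift_conjugate c t) = - 1 / E - c"
    using E by (simp add: field_simps)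
  then show ?thesis
    by (simp add: exp_diff exp_minus E_def divide_inverse)
qed

lemma shift_conjugate_functional_equation:
  fixes \<phi> :: "real \<Rightarrow> real"
  assumes "\<And>s. 0 < s \<Longrightarrow> s \<le> 1 \<Longrightarrow> \<phi> s = exp (- 1 / exp (- 1 / s))"
    and "c \<ge> 0" "0 < t" "t \<le> 1"
  shows "\<phi> (shift_conjugate c t) = exp (- c) * \<phi> t"
proof -
  have "\<phi> (shift_conjugate c t) = exp (- 1 / exp (- 1 / shift_conjugate c t))"
    using assms shift_conjugate_pos_le[OF assms(2,3)] by auto
  also have "\<dots> = exp (- c) * \<phi> t"
    using exp_exp_shift_conjugate[OF assms(2,3)] assms by simp
  finally show ?thesis .
qed

lemma strict_mono_on_if_deriv_pos:
  fixes f :: "real \<Rightarrow> real"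
  assumes "\<And>x. x > a \<Longrightarrow> (f has_real_derivative f' x) (at x)" and "\<And>x. x > a \<Longrightarrow> f' x > 0"
  shows "strict_mono_on {a<..} f"
proof (rule strict_mono_onI)
  fix r s assume "r \<in> {a<..}" "s \<in> {a<..}" "r < s"
  then show "f r < f s"
    using assms by (intro DERIV_pos_imp_increasing[OF \<open>r < s\<close>]) (metis greaterThan_iff less_le_trans)
qed

theorem mainTheorem3:
  fixes \<phi> h :: "real \<Rightarrow> real" and lam :: real
  assumes smooth: "smooth_on UNIV \<phi>"
    and neg: "\<forall>t\<le>0. \<phi> t = 0"
    and unit: "\<forall>t. 0 < t \<and> t \<le> 1 \<longrightarrow> \<phi> t = exp (- 1 / exp (- 1 / t))"
    and pos: "\<forall>t>0. deriv \<phi> t > 0"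
    and lam: "0 < lam" "lam < 1"
    and h_def: "\<forall>t. h t = (if t \<le> 0 then t
                          else the_inv_into {0<..} \<phi> (lam ^ 3 * \<phi> t))"
  shows "\<exists>S. open S \<and> 0 \<in> S \<and> smooth_on S h"
proof -
  define c where "c = - ln (lam ^ 3)"
  have c: "c \<ge> 0" "exp (- c) = lam ^ 3"
    using lam by (auto simp: c_def power_le_one)
  have "(\<phi> has_real_derivative deriv \<phi> x) (at x)" for x
    using smooth unfolding smooth_on_def
    by (metis UNIV_I funpow_0 DERIV_deriv_iff_real_differentiable)
  then have inj: "inj_on \<phi> {0<..}"
    using pos by (intro strict_mono_on_imp_inj_on strict_mono_on_if_deriv_pos[of 0 \<phi> "deriv \<phi>"]) auto
  have h_eq: "shift_conjugate c t = h t" if "t < 1" for t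
  proof (cases "t \<le> 0")
    case True
    then show ?thesis using h_def by (simp add: shift_conjugate_nonpos)
  next
    case False
    with that have "\<phi> (shift_conjugate c t) = lam ^ 3 * \<phi> t"
      using shift_conjugate_functional_equation[of \<phi> c t] unit c by simp
    with False show ?thesis
      using inj shift_conjugate_pos_le[OF c(1), of t] h_def by (simp add: the_inv_into_f_eq)
  qed
  have "differentiable_upto n {..<1} h" for n
  proof (rule differentiable_upto_cong)
    show "differentiable_upto n {..<1} (shift_conjugate c)"
      by (rule differentiable_upto_subset[OF differentiable_upto_shift_conjugate[OF c(1)]]) simp
  qed (use h_eq in auto)
  then have "smooth_on {..<1} h"
    by (rule smooth_onI_differentiable_upto)
  then show ?thesis
    by (intro exI[of _ "{..<1}"]) auto
qed

end
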